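(* There exist positive constants $r_{m,4}$, $c_{m,12}$ and $N_{m,1}\in\mathbb N$ depending only on $m$ such that for every $r\ge r_{m,4}$ and every $n\ge N_{m,1}$, \[P\left(\inf_{t\ge r}L_n(t)<F_m(0)+\frac{F_m(r)-F_m(0)}{4}\right)\le c_{m,12}\,r^{-n\lambda_m/2}.\]
   Context: Fix $m>1/2$ and set $\lambda_m:=\frac12\left(m-\frac12\right)$. Let $c_m:=\left(\int_{\mathbb R}(1+x^2)^{-m}dx\right)^{-1}$ and $\nu_m(dx):=c_m(1+x^2)^{-m}dx$. Let $(X_n)_{n\ge1}$ be i.i.d. random variables on $(\Omega,\mathcal F,P)$ with law $\nu_m$. Let $L_n(t):=\frac1n\sum_{i=1}^n\log(1+(X_i-t)^2)$ and $F_m(t):=\int_{\mathbb R}\log(1+(x-t)^2)\,\nu_m(dx)$ for $t\in\mathbb R$. *)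

theory Defs
  imports "HOL-Probability.Probability"
begin

definition lam :: "real \<Rightarrow> real" where
  "lam m = (1/2) * (m - 1/2)"

definition cnorm :: "real \<Rightarrow> real" where
  "cnorm m = 1 / (\<integral>x. (1 + x\<^sup>2) powr (- m) \<partial>lborel)"

definition nu :: "real \<Rightarrow> real measure" where
  "nu m = density lborel (\<lambda>x. ennreal (cnorm m * (1 + x\<^sup>2) powr (- m)))"

definition Fm :: "real \<Rightarrow> real \<Rightarrow> real" where
  "Fm m t = (\<integral>x. ln (1 + (x - t)\<^sup>2) \<partial>nu m)"

definition Ln :: "(nat \<Rightarrow> 'a \<Rightarrow> real) \<Rightarrow> nat \<Rightarrow> real \<Rightarrow> 'a \<Rightarrow> real" where
  "Ln X n t \<omega> = (1 / real n) * (\<Sum>i=1..n. ln (1 + (X i \<omega> - t)\<^sup>2))"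

end

theory Submission
  imports Defs "HOL-Real_Asymp.Real_Asymp"
begin

(* Since ln (1 + (a - b)^2) <= ln 2 + ln (1 + a^2) + ln (1 + b^2), the threshold
   F(0) + (F(r) - F(0))/4 is at most F(0) + (ln r)/2 + O(1) <= (2/3) ln (r/2) for large r.
   For t >= r every sample with |X_i| < r/2 contributes at least 2 ln (r/2) to n L_n(t),
   so L_n(t) below the threshold forces at least 2n/3 of X_1, ..., X_n into the tail
   {|x| >= r/2}, whose nu_m-mass is O(r^(1-2m)) = O(r^(-4 lambda_m)), which for large r is
   below eps = 2^(-3/2) r^(-3 lambda_m/4).  A union bound over the at most 2^n index
   sets of size >= 2n/3 and independence give the probability bound
   2^n eps^(2n/3) = r^(-n lambda_m/2); thus c_{m,12} = 1 and N_{m,1} = 1 suffice. *)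

lemma nn_integral_powr_tail:
  fixes s e :: real
  assumes "e < -1" "s > 0"
  shows "(\<integral>\<^sup>+x. ennreal (indicator {s..} x * x powr e) \<partial>lborel) = ennreal (- (s powr (e + 1) / (e + 1)))"
  using nn_integral_has_integral_lebesgue[OF _ has_integral_powr_to_inf[OF assms]] by simp

lemma nn_integral_abs_powr_tail:
  fixes s e :: real
  assumes "e < -1" "s > 0"
  shows "(\<integral>\<^sup>+x. ennreal (indicator {x. s \<le> \<bar>x\<bar>} x * \<bar>x\<bar> powr e) \<partial>lborel)
    = 2 * ennreal (- (s powr (e + 1) / (e + 1)))"
proof -
  let ?f = "\<lambda>x::real. ennreal (indicator {s..} x * x powr e)"
  have split: "ennreal (indicator {x. s \<le> \<bar>x\<bar>} x * \<bar>x\<bar> powr e) = ?f x + ?f (- x)" for x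
    using assms by (auto simp: indicator_def)
  have reflect: "integral\<^sup>N lborel ?f = (\<integral>\<^sup>+x. ?f (- x) \<partial>lborel)"
    by (subst nn_integral_real_affine[where c = "-1" and t = 0]) auto
  show ?thesis
    unfolding split using nn_integral_powr_tail[OF assms]
    by (subst nn_integral_add) (auto simp flip: reflect mult_2)
qed

lemma one_plus_square_powr_le:
  fixes x m :: real
  assumes "x \<noteq> 0" "m \<ge> 0"
  shows "(1 + x\<^sup>2) powr (- m) \<le> \<bar>x\<bar> powr (- 2 * m)"
proof -
  have "(1 + x\<^sup>2) powr (- m) \<le> (\<bar>x\<bar> powr 2) powr (- m)"
    using assms by (intro powr_mono2') (auto simp: powr_numeral)
  also have "\<dots> = \<bar>x\<bar> powr (2 * - m)"
    by (rule powr_powr)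
  finally show ?thesis
    by simp
qed

lemma measure_nu_abs_ge_le:
  assumes m: "m > 1/2" and s: "s > 0"
  shows "measure (nu m) {x. s \<le> \<bar>x\<bar>} \<le> cnorm m / (2 * lam m) * s powr (- 4 * lam m)"
proof -
  define c where "c = cnorm m"
  have c: "c \<ge> 0"
    unfolding c_def cnorm_def by (simp add: integral_nonneg_AE)
  have e: "- 2 * m < -1" "- 2 * m + 1 = - 4 * lam m"
    using m by (auto simp: lam_def)
  have l: "lam m > 0"
    using m by (simp add: lam_def)
  have "emeasure (nu m) {x. s \<le> \<bar>x\<bar>}
      = (\<integral>\<^sup>+x. ennreal (c * (1 + x\<^sup>2) powr (- m)) * indicator {x. s \<le> \<bar>x\<bar>} x \<partial>lborel)"
    unfolding nu_def c_def by (subst emeasure_density) auto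
  also have "\<dots> \<le> (\<integral>\<^sup>+x. ennreal c * ennreal (indicator {x. s \<le> \<bar>x\<bar>} x * \<bar>x\<bar> powr (- 2 * m)) \<partial>lborel)"
  proof (intro nn_integral_mono)
    fix x :: real
    show "ennreal (c * (1 + x\<^sup>2) powr (- m)) * indicator {x. s \<le> \<bar>x\<bar>} x
        \<le> ennreal c * ennreal (indicator {x. s \<le> \<bar>x\<bar>} x * \<bar>x\<bar> powr (- 2 * m))"
      using one_plus_square_powr_le[of x m] s m c
      by (auto simp: indicator_def simp flip: ennreal_mult intro!: ennreal_leI mult_left_mono)
  qed
  also have "\<dots> = ennreal c * (2 * ennreal (- (s powr (- 2 * m + 1) / (- 2 * m + 1))))"
    using nn_integral_abs_powr_tail[OF e(1) s] by (simp add: nn_integral_cmult)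
  also have "\<dots> = ennreal (c * (2 * (- (s powr (- 2 * m + 1) / (- 2 * m + 1)))))"
  proof -
    have "ennreal c * (2 * ennreal v) = ennreal (c * (2 * v))" if "0 \<le> v" for v
      using c that by (simp add: ennreal_mult)
    moreover have "0 \<le> - (s powr (- 2 * m + 1) / (- 2 * m + 1))"
      using e(1) by (simp add: divide_nonneg_neg)
    ultimately show ?thesis
      by blast
  qed
  also have "\<dots> = ennreal (cnorm m / (2 * lam m) * s powr (- 4 * lam m))"
    unfolding e(2) c_def using l by (simp add: field_simps)
  finally show ?thesis
    unfolding measure_def using c l by (intro enn2real_leI) (auto simp: c_def)
qed

lemma ln_one_plus_square_diff_le:
  fixes x y :: real
  shows "ln (1 + (x - y)\<^sup>2) \<le> ln 2 + ln (1 + x\<^sup>2) + ln (1 + y\<^sup>2)"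
proof -
  have "1 + (x - y)\<^sup>2 \<le> 2 * (1 + x\<^sup>2) * (1 + y\<^sup>2)"
  proof -
    have "2 * (1 + x\<^sup>2) * (1 + y\<^sup>2) = 1 + (x - y)\<^sup>2 + ((x + y)\<^sup>2 + 1 + 2 * (x * y)\<^sup>2)"
      by (simp add: power2_eq_square algebra_simps)
    then show ?thesis
      using zero_le_power2[of "x + y"] zero_le_power2[of "x * y"] by linarith
  qed
  then have "ln (1 + (x - y)\<^sup>2) \<le> ln (2 * (1 + x\<^sup>2) * (1 + y\<^sup>2))"
    by (intro ln_mono) (auto intro: add_pos_nonneg)
  also have "\<dots> = ln 2 + ln (1 + x\<^sup>2) + ln (1 + y\<^sup>2)"
    using ln_mult_pos[of "2 * (1 + x\<^sup>2)" "1 + y\<^sup>2"] ln_mult_pos[of 2 "1 + x\<^sup>2"]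
    by (simp add: add_pos_nonneg)
  finally show ?thesis .
qed

lemma ln_one_plus_square_shift_le:
  fixes x s t :: real
  shows "ln (1 + (x - t)\<^sup>2) \<le> ln (1 + (x - s)\<^sup>2) + (ln 2 + ln (1 + (t - s)\<^sup>2))"
  using ln_one_plus_square_diff_le[of "x - s" "t - s"] by (simp add: add_ac)

lemma integrable_ln_one_plus_square_shift:
  fixes \<mu> :: "real measure"
  assumes "prob_space \<mu>" "sets \<mu> = sets borel" "integrable \<mu> (\<lambda>x. ln (1 + (x - s)\<^sup>2))"
  shows "integrable \<mu> (\<lambda>x. ln (1 + (x - t)\<^sup>2))"
proof (rule Bochner_Integration.integrable_bound)
  interpret prob_space \<mu> by fact
  show "integrable \<mu> (\<lambda>x. ln (1 + (x - s)\<^sup>2) + (ln 2 + ln (1 + (t - s)\<^sup>2)))"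
    using assms(3) by simp
  show "(\<lambda>x. ln (1 + (x - t)\<^sup>2)) \<in> borel_measurable \<mu>"
    unfolding measurable_cong_sets[OF assms(2) refl] by measurable
  have "0 \<le> ln (1 + (x - s)\<^sup>2) + (ln 2 + ln (1 + (t - s)\<^sup>2))" for x
    by (simp add: add_nonneg_nonneg)
  then show "AE x in \<mu>. norm (ln (1 + (x - t)\<^sup>2)) \<le> norm (ln (1 + (x - s)\<^sup>2) + (ln 2 + ln (1 + (t - s)\<^sup>2)))"
    using ln_one_plus_square_shift_le[of _ t s] by (intro AE_I2) simp
qed

lemma integral_ln_one_plus_square_shift_le:
  fixes \<mu> :: "real measure"
  assumes "prob_space \<mu>" "sets \<mu> = sets borel"
  shows "(\<integral>x. ln (1 + (x - t)\<^sup>2) \<partial>\<mu>) \<le> (\<integral>x. ln (1 + (x - s)\<^sup>2) \<partial>\<mu>) + (ln 2 + ln (1 + (t - s)\<^sup>2))"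
proof (cases "integrable \<mu> (\<lambda>x. ln (1 + (x - s)\<^sup>2))")
  case True
  interpret prob_space \<mu> by fact
  have "(\<integral>x. ln (1 + (x - t)\<^sup>2) \<partial>\<mu>) \<le> (\<integral>x. ln (1 + (x - s)\<^sup>2) + (ln 2 + ln (1 + (t - s)\<^sup>2)) \<partial>\<mu>)"
    using True integrable_ln_one_plus_square_shift[OF assms True] ln_one_plus_square_shift_le
    by (intro integral_mono) auto
  then show ?thesis
    using True by (simp add: prob_space)
next
  case False
  \<comment> \<open>then neither integral converges, and both take the junk value 0\<close>
  then have "\<not> integrable \<mu> (\<lambda>x. ln (1 + (x - t)\<^sup>2))"
    using integrable_ln_one_plus_square_shift[OF assms] by blast
  then show ?thesis
    using False by (simp add: not_integrable_integral_eq add_nonneg_nonneg)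
qed

lemma sets_nu: "sets (nu m) = sets borel"
  by (simp add: nu_def)

lemma Fm_le_Fm_0:
  assumes "prob_space (nu m)" "1 \<le> r"
  shows "Fm m r \<le> Fm m 0 + 2 * ln 2 + 2 * ln r"
proof -
  have "Fm m r \<le> Fm m 0 + (ln 2 + ln (1 + r\<^sup>2))"
    using integral_ln_one_plus_square_shift_le[OF assms(1) sets_nu, of r 0]
    unfolding Fm_def by simp
  also have "ln (1 + r\<^sup>2) \<le> ln (2 * r\<^sup>2)"
    using assms(2) one_le_power[OF assms(2), of 2] by (intro ln_mono) (auto intro: add_pos_nonneg)
  also have "\<dots> = ln 2 + 2 * ln r"
    using assms(2) by (simp add: ln_mult ln_realpow)
  finally show ?thesis
    by simp
qed

lemma card_near_mult_ln_le_Ln: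
  fixes X :: "nat \<Rightarrow> 'a \<Rightarrow> real"
  assumes s: "0 < s" and t: "2 * s \<le> t"
  shows "real (card {i\<in>{1..n}. \<bar>X i \<omega>\<bar> < s}) * (2 * ln s) \<le> real n * Ln X n t \<omega>"
proof -
  define f where "f i = ln (1 + (X i \<omega> - t)\<^sup>2)" for i
  have near: "2 * ln s \<le> f i" if "\<bar>X i \<omega>\<bar> < s" for i
  proof -
    have "s \<le> \<bar>X i \<omega> - t\<bar>"
      using that t by auto
    then have "s\<^sup>2 \<le> (X i \<omega> - t)\<^sup>2"
      using power_mono[of s "\<bar>X i \<omega> - t\<bar>" 2] s by simp
    then have "ln (s\<^sup>2) \<le> f i"
      unfolding f_def using s by (intro ln_mono) auto
    then show ?thesis
      using s by (simp add: ln_realpow)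
  qed
  have "real (card {i\<in>{1..n}. \<bar>X i \<omega>\<bar> < s}) * (2 * ln s) = (\<Sum>i\<in>{i\<in>{1..n}. \<bar>X i \<omega>\<bar> < s}. 2 * ln s)"
    by simp
  also have "\<dots> \<le> (\<Sum>i\<in>{i\<in>{1..n}. \<bar>X i \<omega>\<bar> < s}. f i)"
    using near by (intro sum_mono) simp
  also have "\<dots> \<le> (\<Sum>i=1..n. f i)"
    unfolding f_def by (intro sum_mono2) auto
  also have "\<dots> = real n * Ln X n t \<omega>"
    unfolding Ln_def f_def by simp
  finally show ?thesis .
qed

lemma card_far_ge_if_Ln_less:
  fixes X :: "nat \<Rightarrow> 'a \<Rightarrow> real"
  assumes s: "1 < s" and t: "2 * s \<le> t" and Ln: "Ln X n t \<omega> < 2/3 * ln s"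
  shows "2 * real n \<le> 3 * real (card {i\<in>{1..n}. s \<le> \<bar>X i \<omega>\<bar>})"
proof -
  let ?near = "{i\<in>{1..n}. \<bar>X i \<omega>\<bar> < s}" and ?far = "{i\<in>{1..n}. s \<le> \<bar>X i \<omega>\<bar>}"
  have "card ?near + card ?far = card (?near \<union> ?far)"
    by (intro card_Un_disjoint[symmetric]) auto
  also have "?near \<union> ?far = {1..n}"
    by auto
  finally have "card ?near + card ?far = n"
    by simp
  then have partition: "real (card ?near) + real (card ?far) = real n"
    by linarith
  have "real (card ?near) * (2 * ln s) \<le> real n * Ln X n t \<omega>"
    using s t by (intro card_near_mult_ln_le_Ln) auto
  also have "\<dots> \<le> real n * (2/3 * ln s)"
    using Ln by (intro mult_left_mono) auto
  finally have "real (card ?near) * (2 * ln s) \<le> real n * (2/3 * ln s)" .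
  then have "real (card ?near) \<le> real n / 3"
    using s by (simp add: field_simps)
  then show ?thesis
    using partition by linarith
qed

text \<open>Union bound over the index sets of size at least \<open>a\<close>, each of which hits \<open>U\<close> with
  probability at most \<open>p\<^sup>a\<close> by independence.\<close>
lemma (in prob_space) prob_many_hits_le:
  fixes X :: "'i \<Rightarrow> 'a \<Rightarrow> 'b"
  assumes indep: "indep_vars (\<lambda>_. N) X I" and J: "finite J" "J \<subseteq> I" and U: "U \<in> sets N"
    and p: "\<And>i. i \<in> J \<Longrightarrow> prob (X i -` U \<inter> space M) \<le> p" "0 < p" "p \<le> 1"
    and a: "0 < a" and E: "E \<subseteq> space M" "\<And>\<omega>. \<omega> \<in> E \<Longrightarrow> a \<le> real (card {i\<in>J. X i \<omega> \<in> U})"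
  shows "prob E \<le> 2 ^ card J * p powr a"
proof -
  define \<K> where "\<K> = {K. K \<subseteq> J \<and> a \<le> real (card K)}"
  define A where "A K = (\<Inter>i\<in>K. X i -` U \<inter> space M)" for K
  have \<K>: "finite K" "K \<subseteq> J" "K \<subseteq> I" "K \<noteq> {}" "a \<le> real (card K)" if "K \<in> \<K>" for K
    using that J a finite_subset[of K J] by (auto simp: \<K>_def)
  have X_events: "X i -` U \<inter> space M \<in> events" if "i \<in> I" for i
    using indep U that by (auto simp: indep_vars_def)
  have A_events: "A K \<in> events" if "K \<in> \<K>" for K
    unfolding A_def using \<K>[OF that] X_events by (intro sets.finite_INT) auto
  have prob_A: "prob (A K) \<le> p powr a" if "K \<in> \<K>" for K
  proof -
    have "prob (A K) = (\<Prod>i\<in>K. prob (X i -` U \<inter> space M))"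
      unfolding A_def using indep U \<K>[OF that]
      by (intro indep_setsD[of "\<lambda>i. {X i -` A \<inter> space M | A. A \<in> sets N}" I]) (auto simp: indep_vars_def2)
    also have "\<dots> \<le> (\<Prod>i\<in>K. p)"
      using \<K>(2)[OF that] p(1) by (intro prod_mono) auto
    also have "\<dots> = p ^ card K"
      by simp
    also have "\<dots> = p powr card K"
      using p by (simp add: powr_realpow)
    also have "\<dots> \<le> p powr a"
      using \<K>[OF that] p by (intro powr_mono') auto
    finally show ?thesis .
  qed
  have "E \<subseteq> (\<Union>K\<in>\<K>. A K)"
  proof
    fix \<omega> assume "\<omega> \<in> E"
    then have "{i\<in>J. X i \<omega> \<in> U} \<in> \<K>" "\<omega> \<in> A {i\<in>J. X i \<omega> \<in> U}"
      using E by (auto simp: \<K>_def A_def)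
    then show "\<omega> \<in> (\<Union>K\<in>\<K>. A K)"
      by blast
  qed
  moreover have "finite \<K>"
    using J by (intro finite_subset[of \<K> "Pow J"]) (auto simp: \<K>_def)
  ultimately have "prob E \<le> prob (\<Union>K\<in>\<K>. A K)"
    using A_events by (intro finite_measure_mono sets.finite_UN) auto
  also have "\<dots> \<le> (\<Sum>K\<in>\<K>. prob (A K))"
    using \<open>finite \<K>\<close> A_events by (intro measure_UNION_le) auto
  also have "\<dots> \<le> real (card \<K>) * p powr a"
    using sum_mono[OF prob_A] by simp
  also have "\<dots> \<le> 2 ^ card J * p powr a"
  proof -
    have "card \<K> \<le> card (Pow J)"
      using J by (intro card_mono) (auto simp: \<K>_def)
    then show ?thesis
      using J by (intro mult_right_mono) (auto simp: card_Pow)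
  qed
  finally show ?thesis .
qed

lemma (in prob_space) prob_inf_Ln_below_threshold_le:
  assumes m: "m > 1/2" and indep: "indep_vars (\<lambda>_. borel) X {1..}"
    and distr: "\<And>i. 1 \<le> i \<Longrightarrow> distr M borel (X i) = nu m"
    and n: "1 \<le> n" and r: "1 \<le> r" "6 * \<bar>Fm m 0\<bar> + 7 * ln 2 \<le> ln r"
    and tail: "measure (nu m) {x. r/2 \<le> \<bar>x\<bar>} \<le> 2 powr (-3/2) * r powr (-(3/4) * lam m)"
  shows "prob {\<omega> \<in> space M. (INF t\<in>{r..}. Ln X n t \<omega>) < Fm m 0 + (Fm m r - Fm m 0) / 4}
    \<le> r powr (- (real n * lam m / 2))"
proof -
  define E where "E = {\<omega> \<in> space M. (INF t\<in>{r..}. Ln X n t \<omega>) < Fm m 0 + (Fm m r - Fm m 0) / 4}"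
  define \<epsilon> where "\<epsilon> = 2 powr (-3/2) * r powr (-(3/4) * lam m)"
  define U where "U = {x::real. r/2 \<le> \<bar>x\<bar>}"
  have X_measurable: "X i \<in> borel_measurable M" if "1 \<le> i" for i
    using indep that by (auto simp: indep_vars_def)
  have nu: "prob_space (nu m)"
    using prob_space_distr[OF X_measurable] distr by (metis order_refl)
  have "ln (r/2) = ln r - ln 2"
    using r by (simp add: ln_div)
  then have threshold: "Fm m 0 + (Fm m r - Fm m 0) / 4 \<le> 2/3 * ln (r/2)"
    using Fm_le_Fm_0[OF nu r(1)] r(2) abs_ge_self[of "Fm m 0"] by (simp add: field_simps)
  have "prob E \<le> 2 ^ card {1..n} * \<epsilon> powr (2/3 * real n)"
  proof (rule prob_many_hits_le[OF indep])
    show "prob (X i -` U \<inter> space M) \<le> \<epsilon>" if "i \<in> {1..n}" for i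
      using tail distr[of i] that measure_distr[OF X_measurable, of i U]
      unfolding U_def \<epsilon>_def by simp
    have "lam m > 0"
      using m by (simp add: lam_def)
    then show "0 < \<epsilon>" "\<epsilon> \<le> 1"
      unfolding \<epsilon>_def using r(1) powr_mono[of "-3/2" 0 "2::real"] powr_mono[of "-(3/4) * lam m" 0 r]
      by (auto intro: mult_le_one)
    show "U \<in> sets borel"
      unfolding U_def by measurable
    show "0 < 2/3 * real n"
      using n by simp
    show "E \<subseteq> space M"
      by (simp add: E_def)
    show "2/3 * real n \<le> real (card {i\<in>{1..n}. X i \<omega> \<in> U})" if "\<omega> \<in> E" for \<omega>
    proof -
      have INF_less: "(INF t\<in>{r..}. Ln X n t \<omega>) < 2/3 * ln (r/2)"
        using that less_le_trans[OF _ threshold] by (simp add: E_def)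
      obtain t where "r \<le> t" "Ln X n t \<omega> < 2/3 * ln (r/2)"
        using cInf_lessD[OF _ INF_less] by blast
      moreover have "ln 2 < ln r"
        using r(2) ln_gt_zero[of 2] abs_ge_zero[of "Fm m 0"] by linarith
      then have "1 < r/2"
        using r(1) by simp
      ultimately show ?thesis
        using card_far_ge_if_Ln_less[of "r/2" t X n \<omega>] unfolding U_def by simp
    qed
  qed auto
  also have "\<dots> = r powr (- (real n * lam m / 2))"
  proof -
    have "\<epsilon> powr (2/3 * real n) = 2 powr (- real n) * r powr (- (real n * lam m / 2))"
      unfolding \<epsilon>_def using r(1) by (simp add: powr_mult powr_powr mult.commute)
    moreover have "(2::real) ^ n * 2 powr (- real n) = 1"
      by (simp add: powr_minus powr_realpow)
    ultimately show ?thesis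
      by simp
  qed
  finally show ?thesis
    unfolding E_def .
qed

lemma eventually_measure_nu_tail_le:
  assumes "m > 1/2"
  shows "\<forall>\<^sub>F r in at_top. measure (nu m) {x. r/2 \<le> \<bar>x\<bar>} \<le> 2 powr (-3/2) * r powr (-(3/4) * lam m)"
proof -
  have "lam m > 0"
    using assms by (simp add: lam_def)
  then have "\<forall>\<^sub>F r in at_top. 0 < r \<and>
      cnorm m / (2 * lam m) * (r/2) powr (- 4 * lam m) \<le> 2 powr (-3/2) * r powr (-(3/4) * lam m)"
    by (intro eventually_conj) real_asymp+
  then show ?thesis
  proof eventually_elim
    case (elim r)
    then show ?case
      using measure_nu_abs_ge_le[OF assms, of "r/2"] by simp
  qed
qed

theorem lemma6p2:
  fixes m :: real
  assumes "m > 1/2"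
  shows "\<exists>r4 c12 :: real. \<exists>N1 :: nat. r4 > 0 \<and> c12 > 0 \<and> N1 \<ge> 1 \<and>
    (\<forall>(M :: 'a measure) (X :: nat \<Rightarrow> 'a \<Rightarrow> real).
       prob_space M \<and>
       (\<forall>i\<ge>1. X i \<in> borel_measurable M) \<and>
       prob_space.indep_vars M (\<lambda>_. borel) X {1..} \<and>
       (\<forall>i\<ge>1. distr M borel (X i) = nu m)
       \<longrightarrow> (\<forall>r \<ge> r4. \<forall>n \<ge> N1.
             measure M {\<omega> \<in> space M.
                (INF t\<in>{r..}. Ln X n t \<omega>) < Fm m 0 + (Fm m r - Fm m 0) / 4}
             \<le> c12 * r powr (- (real n * lam m / 2))))"
proof -
  have "\<forall>\<^sub>F r in at_top. 1 \<le> r \<and> 6 * \<bar>Fm m 0\<bar> + 7 * ln 2 \<le> ln r \<and>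
      measure (nu m) {x. r/2 \<le> \<bar>x\<bar>} \<le> 2 powr (-3/2) * r powr (-(3/4) * lam m)"
    by (intro eventually_conj eventually_measure_nu_tail_le[OF assms]) real_asymp+
  then obtain r4 where r4: "\<And>r. r4 \<le> r \<Longrightarrow> 1 \<le> r \<and> 6 * \<bar>Fm m 0\<bar> + 7 * ln 2 \<le> ln r \<and>
      measure (nu m) {x. r/2 \<le> \<bar>x\<bar>} \<le> 2 powr (-3/2) * r powr (-(3/4) * lam m)"
    unfolding eventually_at_top_linorder by blast
  show ?thesis
  proof (rule exI[of _ "max r4 1"], rule exI[of _ 1], rule exI[of _ 1], intro conjI allI impI)
    fix M :: "'a measure" and X :: "nat \<Rightarrow> 'a \<Rightarrow> real" and r :: real and n :: nat
    assume H: "prob_space M \<and> (\<forall>i\<ge>1. X i \<in> borel_measurable M) \<and>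
      prob_space.indep_vars M (\<lambda>_. borel) X {1..} \<and> (\<forall>i\<ge>1. distr M borel (X i) = nu m)"
      and r: "max r4 1 \<le> r" and n: "1 \<le> n"
    interpret prob_space M
      using H by simp
    have "prob {\<omega> \<in> space M. (INF t\<in>{r..}. Ln X n t \<omega>) < Fm m 0 + (Fm m r - Fm m 0) / 4}
        \<le> r powr (- (real n * lam m / 2))"
      using H r4[of r] r n by (intro prob_inf_Ln_below_threshold_le[OF assms]) auto
    then show "prob {\<omega> \<in> space M. (INF t\<in>{r..}. Ln X n t \<omega>) < Fm m 0 + (Fm m r - Fm m 0) / 4}
        \<le> 1 * r powr (- (real n * lam m / 2))"
      by simp
  qed auto
qed

end
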